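(* Let $\mathbf A$ be a finite subdirectly irreducible cBCK-algebra that is not a chain. Then the smallest set generating $\mathbf A$ is $\mathrm{m}(\mathbf A)$ (i.e., $\mathrm{m}(\mathbf A)$ generates $\mathbf A$) if and only if $\mathcal S_\delta(\mathbf A)=\emptyset$.
   Context: A BCK-algebra is an algebra $(A,\ominus,0)$ of type $(2,0)$ satisfying $((x\ominus y)\ominus(x\ominus z))\ominus(z\ominus y)=0$, $x\ominus 0=x$, $0\ominus x=0$, and ($x\ominus y=0$ and $y\ominus x=0$ imply $x=y$); it is ordered by $x\le y$ iff $x\ominus y=0$. A cBCK-algebra is a BCK-algebra satisfying $x\ominus(x\ominus y)=y\ominus(y\ominus x)$; its order is a meet-semilattice with $x\wedge y=x\ominus(x\ominus y)$. Finite subdirectly irreducible cBCK-algebras are, as posets, rooted trees with root $0$. For $a\in A$, $\mathrm{h}(a)=|[0,a]|-1$; $n=\mathrm{h}(\mathbf A)$ is the maximum height. $\mathrm{m}(\mathbf A)$ is the set of maximal elements. For $k$ a divisor of $n$ with $k\ne 1,n$, put $A_k=\{x\in A\mid k \text{ divides } \mathrm{h}(x)\}$; $\mathcal S_\delta(\mathbf A)$ is the set of subalgebras of $\mathbf A$ whose universe is of the form $A_k\cup\mathrm{m}(\mathbf A)$ for such a $k$. *)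

theory Defs
  imports Main
begin

text \<open>Algebras of type (2,0) are given by a carrier set A, a binary operation
  f (written \<ominus> in the paper) and a constant z (written 0 in the paper).\<close>

definition bck_algebra :: "'a set \<Rightarrow> ('a \<Rightarrow> 'a \<Rightarrow> 'a) \<Rightarrow> 'a \<Rightarrow> bool" where
  "bck_algebra A f z \<longleftrightarrow>
     z \<in> A \<and> (\<forall>x\<in>A. \<forall>y\<in>A. f x y \<in> A) \<and>
     (\<forall>x\<in>A. \<forall>y\<in>A. \<forall>u\<in>A. f (f (f x y) (f x u)) (f u y) = z) \<and>
     (\<forall>x\<in>A. f x z = x) \<and>
     (\<forall>x\<in>A. f z x = z) \<and>
     (\<forall>x\<in>A. \<forall>y\<in>A. f x y = z \<and> f y x = z \<longrightarrow> x = y)"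

definition cbck_algebra :: "'a set \<Rightarrow> ('a \<Rightarrow> 'a \<Rightarrow> 'a) \<Rightarrow> 'a \<Rightarrow> bool" where
  "cbck_algebra A f z \<longleftrightarrow> bck_algebra A f z \<and>
     (\<forall>x\<in>A. \<forall>y\<in>A. f x (f x y) = f y (f y x))"

definition bck_le :: "('a \<Rightarrow> 'a \<Rightarrow> 'a) \<Rightarrow> 'a \<Rightarrow> 'a \<Rightarrow> 'a \<Rightarrow> bool" where
  "bck_le f z x y \<longleftrightarrow> f x y = z"

definition is_chain_alg :: "'a set \<Rightarrow> ('a \<Rightarrow> 'a \<Rightarrow> 'a) \<Rightarrow> 'a \<Rightarrow> bool" where
  "is_chain_alg A f z \<longleftrightarrow> (\<forall>x\<in>A. \<forall>y\<in>A. bck_le f z x y \<or> bck_le f z y x)"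

definition congruence :: "'a set \<Rightarrow> ('a \<Rightarrow> 'a \<Rightarrow> 'a) \<Rightarrow> ('a \<times> 'a) set \<Rightarrow> bool" where
  "congruence A f \<theta> \<longleftrightarrow> equiv A \<theta> \<and>
     (\<forall>x1 x2 y1 y2. (x1, x2) \<in> \<theta> \<and> (y1, y2) \<in> \<theta> \<longrightarrow> (f x1 y1, f x2 y2) \<in> \<theta>)"

definition subdirectly_irreducible :: "'a set \<Rightarrow> ('a \<Rightarrow> 'a \<Rightarrow> 'a) \<Rightarrow> bool" where
  "subdirectly_irreducible A f \<longleftrightarrow> (\<exists>x\<in>A. \<exists>y\<in>A. x \<noteq> y) \<and>
     \<Inter>{\<theta>. congruence A f \<theta> \<and> \<theta> \<noteq> Id_on A} \<noteq> Id_on A"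

definition subalgebra :: "'a set \<Rightarrow> ('a \<Rightarrow> 'a \<Rightarrow> 'a) \<Rightarrow> 'a \<Rightarrow> 'a set \<Rightarrow> bool" where
  "subalgebra A f z B \<longleftrightarrow> B \<subseteq> A \<and> z \<in> B \<and> (\<forall>x\<in>B. \<forall>y\<in>B. f x y \<in> B)"

definition generated :: "'a set \<Rightarrow> ('a \<Rightarrow> 'a \<Rightarrow> 'a) \<Rightarrow> 'a \<Rightarrow> 'a set \<Rightarrow> 'a set" where
  "generated A f z G = \<Inter>{B. subalgebra A f z B \<and> G \<subseteq> B}"

definition generates :: "'a set \<Rightarrow> ('a \<Rightarrow> 'a \<Rightarrow> 'a) \<Rightarrow> 'a \<Rightarrow> 'a set \<Rightarrow> bool" where
  "generates A f z G \<longleftrightarrow> G \<subseteq> A \<and> generated A f z G = A"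

definition height :: "'a set \<Rightarrow> ('a \<Rightarrow> 'a \<Rightarrow> 'a) \<Rightarrow> 'a \<Rightarrow> 'a \<Rightarrow> nat" where
  "height A f z a = card {x \<in> A. bck_le f z z x \<and> bck_le f z x a} - 1"

definition alg_height :: "'a set \<Rightarrow> ('a \<Rightarrow> 'a \<Rightarrow> 'a) \<Rightarrow> 'a \<Rightarrow> nat" where
  "alg_height A f z = Max (height A f z ` A)"

definition maximal_elems :: "'a set \<Rightarrow> ('a \<Rightarrow> 'a \<Rightarrow> 'a) \<Rightarrow> 'a \<Rightarrow> 'a set" where
  "maximal_elems A f z = {x \<in> A. \<forall>y\<in>A. bck_le f z x y \<longrightarrow> y = x}"

definition level_set :: "'a set \<Rightarrow> ('a \<Rightarrow> 'a \<Rightarrow> 'a) \<Rightarrow> 'a \<Rightarrow> nat \<Rightarrow> 'a set" where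
  "level_set A f z k = {x \<in> A. k dvd height A f z x}"

definition S_delta :: "'a set \<Rightarrow> ('a \<Rightarrow> 'a \<Rightarrow> 'a) \<Rightarrow> 'a \<Rightarrow> 'a set set" where
  "S_delta A f z = {B. subalgebra A f z B \<and>
     (\<exists>k. k dvd alg_height A f z \<and> k \<noteq> 1 \<and> k \<noteq> alg_height A f z \<and>
          B = level_set A f z k \<union> maximal_elems A f z)}"

end

theory Submission
  imports Defs
begin

text \<open>
  Two nonzero elements of a subdirectly irreducible cBCK-algebra have a nonzero meet: otherwise
  the polar of one of them and the polar of that polar would be nonzero ideals whose congruences
  meet in the identity. Since every interval [0, x] satisfies the prelinearity law
  (y1 \<ominus> y2) \<and> (y2 \<ominus> y1) = 0, the elements below a common bound are comparable, so the
  order is a rooted tree, and t \<mapsto> x \<ominus> t maps [s, x] bijectively onto [0, x \<ominus> s];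
  hence h(x \<ominus> s) = h(x) - h(s) for s \<le> x.

  In a subalgebra S the nonzero element s of least height g lies below every nonzero element
  of S. Subtracting s shows that every height in S is a multiple of g, and descending from an
  element of S in steps of s (the elements below a common bound being comparable) reaches every
  element below it whose height is a multiple of g. So a subalgebra containing m(A) is A_g; for
  the one generated by m(A) we have g | n, g = 1 iff it is A, and g \<noteq> n because two distinct
  maximal elements have a nonzero meet of smaller height. Conversely, if m(A) generates A, an
  atom below a maximal element of height n lies in no A_k \<union> m(A) with k \<noteq> 1. Finally every
  generating set contains m(A), since removing a maximal element leaves a subalgebra.
\<close>

locale cbck =
  fixes A :: "'a set" and f :: "'a \<Rightarrow> 'a \<Rightarrow> 'a" (infixl "\<ominus>" 70) and z :: 'a
  assumes cbck_algebra: "cbck_algebra A f z"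
begin

abbreviation below :: "'a \<Rightarrow> 'a \<Rightarrow> bool" (infix "\<preceq>" 50) where
  "x \<preceq> y \<equiv> x \<ominus> y = z"

lemma zero_closed [simp]: "z \<in> A"
  using cbck_algebra unfolding cbck_algebra_def bck_algebra_def by blast

lemma sub_closed [simp]: "x \<in> A \<Longrightarrow> y \<in> A \<Longrightarrow> x \<ominus> y \<in> A"
  using cbck_algebra unfolding cbck_algebra_def bck_algebra_def by blast

lemma bck_axiom: "x \<in> A \<Longrightarrow> y \<in> A \<Longrightarrow> w \<in> A \<Longrightarrow> (x \<ominus> y) \<ominus> (x \<ominus> w) \<preceq> w \<ominus> y"
  using cbck_algebra unfolding cbck_algebra_def bck_algebra_def by blast

lemma sub_zero [simp]: "x \<in> A \<Longrightarrow> x \<ominus> z = x"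
  using cbck_algebra unfolding cbck_algebra_def bck_algebra_def by blast

lemma zero_sub [simp]: "x \<in> A \<Longrightarrow> z \<ominus> x = z"
  using cbck_algebra unfolding cbck_algebra_def bck_algebra_def by blast

lemma below_antisym: "x \<in> A \<Longrightarrow> y \<in> A \<Longrightarrow> x \<preceq> y \<Longrightarrow> y \<preceq> x \<Longrightarrow> x = y"
  using cbck_algebra unfolding cbck_algebra_def bck_algebra_def by blast

lemma sub_sub_commute: "x \<in> A \<Longrightarrow> y \<in> A \<Longrightarrow> x \<ominus> (x \<ominus> y) = y \<ominus> (y \<ominus> x)"
  using cbck_algebra unfolding cbck_algebra_def by blast

lemma sub_self [simp]: "x \<in> A \<Longrightarrow> x \<ominus> x = z"
  using bck_axiom[of x z z] by simp

lemma below_trans: "x \<in> A \<Longrightarrow> y \<in> A \<Longrightarrow> w \<in> A \<Longrightarrow> x \<preceq> y \<Longrightarrow> y \<preceq> w \<Longrightarrow> x \<preceq> w"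
  using bck_axiom[of x w y] by simp

lemma sub_antimono: "x \<in> A \<Longrightarrow> y \<in> A \<Longrightarrow> w \<in> A \<Longrightarrow> y \<preceq> w \<Longrightarrow> x \<ominus> w \<preceq> x \<ominus> y"
  using bck_axiom[of x w y] by simp

lemma sub_below: "x \<in> A \<Longrightarrow> y \<in> A \<Longrightarrow> x \<ominus> y \<preceq> x"
  using sub_antimono[of x z y] by simp

lemma sub_sub_below: "x \<in> A \<Longrightarrow> y \<in> A \<Longrightarrow> x \<ominus> (x \<ominus> y) \<preceq> y"
  using bck_axiom[of x z y] by simp

lemma sub_sub_eq_if_below: "x \<in> A \<Longrightarrow> y \<in> A \<Longrightarrow> y \<preceq> x \<Longrightarrow> x \<ominus> (x \<ominus> y) = y"
  using sub_sub_commute[of x y] by simp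

lemma sub_exchange:
  assumes "x \<in> A" "y \<in> A" "w \<in> A"
  shows "(x \<ominus> w) \<ominus> y = (x \<ominus> y) \<ominus> w"
proof -
  have le: "(x \<ominus> w) \<ominus> y \<preceq> (x \<ominus> y) \<ominus> w" if "x \<in> A" "y \<in> A" "w \<in> A" for x y w
  proof (rule below_trans)
    show "(x \<ominus> w) \<ominus> y \<preceq> (x \<ominus> w) \<ominus> (x \<ominus> (x \<ominus> y))"
      using sub_antimono[of "x \<ominus> w" "x \<ominus> (x \<ominus> y)" y] sub_sub_below that by simp
    show "(x \<ominus> w) \<ominus> (x \<ominus> (x \<ominus> y)) \<preceq> (x \<ominus> y) \<ominus> w"
      using bck_axiom[of x w "x \<ominus> y"] that by simp
  qed (use that in simp_all)
  then show ?thesis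
    using below_antisym[OF _ _ le[of x y w] le[of x w y]] assms by simp
qed

lemma sub_sub_sub_below: "x \<in> A \<Longrightarrow> y \<in> A \<Longrightarrow> w \<in> A \<Longrightarrow> (x \<ominus> w) \<ominus> (y \<ominus> w) \<preceq> x \<ominus> y"
  using sub_exchange[of "x \<ominus> w" "x \<ominus> y" "y \<ominus> w"] bck_axiom[of x w y] by simp

lemma sub_mono: "x \<in> A \<Longrightarrow> y \<in> A \<Longrightarrow> w \<in> A \<Longrightarrow> x \<preceq> y \<Longrightarrow> x \<ominus> w \<preceq> y \<ominus> w"
  using sub_sub_sub_below[of x y w] by simp

definition meet :: "'a \<Rightarrow> 'a \<Rightarrow> 'a" where
  "meet x y = x \<ominus> (x \<ominus> y)"

lemma meet_closed [simp]: "x \<in> A \<Longrightarrow> y \<in> A \<Longrightarrow> meet x y \<in> A"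
  by (simp add: meet_def)

lemma meet_below_left: "x \<in> A \<Longrightarrow> y \<in> A \<Longrightarrow> meet x y \<preceq> x"
  by (simp add: meet_def sub_below)

lemma meet_below_right: "x \<in> A \<Longrightarrow> y \<in> A \<Longrightarrow> meet x y \<preceq> y"
  by (simp add: meet_def sub_sub_below)

lemma meet_commute: "x \<in> A \<Longrightarrow> y \<in> A \<Longrightarrow> meet x y = meet y x"
  by (simp add: meet_def sub_sub_commute)

lemma meet_greatest:
  assumes "x \<in> A" "y \<in> A" "c \<in> A" "c \<preceq> x" "c \<preceq> y"
  shows "c \<preceq> meet x y"
proof -
  have "x \<ominus> y \<preceq> x \<ominus> c"
    using sub_antimono[of x c y] assms by simp
  then have "x \<ominus> (x \<ominus> c) \<preceq> x \<ominus> (x \<ominus> y)"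
    using sub_antimono[of x "x \<ominus> y" "x \<ominus> c"] assms by simp
  then show ?thesis
    using sub_sub_eq_if_below[of x c] assms unfolding meet_def by simp
qed

lemma sub_meet:
  assumes "x \<in> A" "y \<in> A"
  shows "x \<ominus> meet x y = x \<ominus> y"
  unfolding meet_def
proof (rule below_antisym)
  show "x \<ominus> (x \<ominus> (x \<ominus> y)) \<preceq> x \<ominus> y"
    using sub_sub_below assms by simp
  show "x \<ominus> y \<preceq> x \<ominus> (x \<ominus> (x \<ominus> y))"
    using sub_antimono[of x "x \<ominus> (x \<ominus> y)" y] sub_sub_below[of x y] assms by simp
qed (use assms in simp_all)

lemma sub_eq_self_if_meet_eq_zero:
  assumes "x \<in> A" "y \<in> A" "meet x y = z"
  shows "x \<ominus> y = x"
  using below_antisym[of "x \<ominus> y" x] sub_below[of x y] assms unfolding meet_def by simp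

lemma complement_below_sub_complement:
  assumes "x \<in> A" "y \<in> A" "m \<in> A" "t \<in> A" "m \<preceq> y" "y \<preceq> x" "t \<preceq> y \<ominus> m"
  shows "x \<ominus> y \<preceq> (x \<ominus> m) \<ominus> t"
proof -
  have "x \<ominus> y \<preceq> x \<ominus> m"
    using sub_antimono[of x m y] assms by simp
  moreover have "(x \<ominus> m) \<ominus> (x \<ominus> y) = y \<ominus> m"
    using sub_exchange[of x "x \<ominus> y" m] sub_sub_eq_if_below[of x y] assms by simp
  ultimately show ?thesis
    using sub_antimono[of "x \<ominus> m" t "y \<ominus> m"] sub_sub_eq_if_below[of "x \<ominus> m" "x \<ominus> y"] assms
    by simp
qed

lemma prelinear_below_common_bound:
  assumes "x \<in> A" "y1 \<in> A" "y2 \<in> A" "t \<in> A" "y1 \<preceq> x" "y2 \<preceq> x"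
    and "t \<preceq> y1 \<ominus> y2" "t \<preceq> y2 \<ominus> y1"
  shows "t = z"
proof -
  define m where "m = meet y1 y2"
  define c where "c = x \<ominus> m"
  \<comment> \<open>The complement x \<ominus> (c \<ominus> t) of c \<ominus> t in [0, x] lies below y1 and y2, hence below m;
    complementing back gives c \<le> c \<ominus> t, which forces t = 0.\<close>
  have mA: "m \<in> A" and cA: "c \<in> A" and ctA: "c \<ominus> t \<in> A"
    using assms by (simp_all add: m_def c_def)
  have t1: "t \<preceq> y1 \<ominus> m"
    using assms sub_meet[of y1 y2] by (simp add: m_def)
  have t2: "t \<preceq> y2 \<ominus> m"
    using assms sub_meet[of y2 y1] meet_commute[of y1 y2] by (simp add: m_def)
  have below_y: "x \<ominus> (c \<ominus> t) \<preceq> y" if "y \<in> A" "m \<preceq> y" "y \<preceq> x" "t \<preceq> y \<ominus> m" for y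
  proof -
    have "x \<ominus> y \<preceq> c \<ominus> t"
      using complement_below_sub_complement[of x y m t] that assms mA by (simp add: c_def)
    then have "x \<ominus> (c \<ominus> t) \<preceq> x \<ominus> (x \<ominus> y)"
      using sub_antimono[of x "x \<ominus> y" "c \<ominus> t"] that assms ctA by simp
    then show ?thesis
      using sub_sub_eq_if_below[of x y] that assms by simp
  qed
  have "x \<ominus> (c \<ominus> t) \<preceq> m"
    unfolding m_def
    using below_y[of y1] below_y[of y2] t1 t2 meet_below_left meet_below_right assms ctA
    by (intro meet_greatest) (simp_all add: m_def)
  then have "c \<preceq> x \<ominus> (x \<ominus> (c \<ominus> t))"
    using sub_antimono[of x "x \<ominus> (c \<ominus> t)" m] assms mA ctA by (simp add: c_def)
  moreover have "c \<ominus> t \<preceq> x"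
  proof -
    have "c \<preceq> x"
      using sub_below assms mA by (simp add: c_def)
    then show ?thesis
      using below_trans[OF ctA cA assms(1) sub_below[OF cA assms(4)]] by simp
  qed
  ultimately have "c \<ominus> (c \<ominus> t) = z"
    using sub_sub_eq_if_below[of x "c \<ominus> t"] assms ctA by simp
  moreover have "t \<preceq> c"
    using below_trans[OF _ _ _ t1 sub_mono[of y1 x m]] assms mA by (simp add: c_def)
  then have "c \<ominus> (c \<ominus> t) = t"
    using sub_sub_eq_if_below cA assms by simp
  ultimately show ?thesis
    by simp
qed

section \<open>Ideals, polars and their congruences\<close>

definition ideal :: "'a set \<Rightarrow> bool" where
  "ideal I \<longleftrightarrow> I \<subseteq> A \<and> z \<in> I \<and> (\<forall>x\<in>A. \<forall>y\<in>A. x \<ominus> y \<in> I \<and> y \<in> I \<longrightarrow> x \<in> I)"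

lemma idealD:
  assumes "ideal I"
  shows "I \<subseteq> A" and "z \<in> I"
    and "x \<in> A \<Longrightarrow> y \<in> A \<Longrightarrow> x \<ominus> y \<in> I \<Longrightarrow> y \<in> I \<Longrightarrow> x \<in> I"
  using assms unfolding ideal_def by blast+

lemma ideal_closed_below:
  assumes "ideal I" "x \<in> A" "y \<in> I" "x \<preceq> y"
  shows "x \<in> I"
proof (rule idealD(3)[OF assms(1,2) _ _ assms(3)])
  show "y \<in> A"
    using idealD(1)[OF assms(1)] assms(3) by blast
  show "x \<ominus> y \<in> I"
    using idealD(2)[OF assms(1)] assms(4) by simp
qed

lemma ideal_sub_trans:
  assumes "ideal I" "x \<in> A" "y \<in> A" "w \<in> A" "x \<ominus> y \<in> I" "y \<ominus> w \<in> I"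
  shows "x \<ominus> w \<in> I"
proof (rule idealD(3)[OF assms(1) _ _ _ assms(5)])
  show "(x \<ominus> w) \<ominus> (x \<ominus> y) \<in> I"
    using ideal_closed_below[OF assms(1) _ assms(6) bck_axiom[of x w y]] assms by simp
qed (use assms in simp_all)

lemma ideal_sub_compat:
  assumes "ideal I" "x1 \<in> A" "x2 \<in> A" "y1 \<in> A" "y2 \<in> A" "x1 \<ominus> x2 \<in> I" "y2 \<ominus> y1 \<in> I"
  shows "(x1 \<ominus> y1) \<ominus> (x2 \<ominus> y2) \<in> I"
proof (rule ideal_sub_trans[OF assms(1), of _ "x2 \<ominus> y1"])
  show "(x1 \<ominus> y1) \<ominus> (x2 \<ominus> y1) \<in> I"
    using ideal_closed_below[OF assms(1) _ assms(6) sub_sub_sub_below[of x1 x2 y1]] assms by simp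
  show "(x2 \<ominus> y1) \<ominus> (x2 \<ominus> y2) \<in> I"
    using ideal_closed_below[OF assms(1) _ assms(7) bck_axiom[of x2 y1 y2]] assms by simp
qed (use assms in simp_all)

definition ideal_congruence :: "'a set \<Rightarrow> ('a \<times> 'a) set" where
  "ideal_congruence I = {(x, y) \<in> A \<times> A. x \<ominus> y \<in> I \<and> y \<ominus> x \<in> I}"

lemma congruence_ideal_congruence:
  assumes "ideal I"
  shows "congruence A (\<ominus>) (ideal_congruence I)"
  unfolding congruence_def
proof (intro conjI allI impI)
  show "equiv A (ideal_congruence I)"
  proof (rule equivI)
    show "ideal_congruence I \<subseteq> A \<times> A"
      unfolding ideal_congruence_def by auto
    show "refl_on A (ideal_congruence I)"
      using idealD(2)[OF assms] unfolding refl_on_def ideal_congruence_def by auto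
    show "sym (ideal_congruence I)"
      unfolding sym_def ideal_congruence_def by auto
    show "trans (ideal_congruence I)"
      unfolding trans_def ideal_congruence_def using ideal_sub_trans[OF assms] by blast
  qed
next
  fix x1 x2 y1 y2
  assume "(x1, x2) \<in> ideal_congruence I \<and> (y1, y2) \<in> ideal_congruence I"
  then have "x1 \<in> A" "x2 \<in> A" "y1 \<in> A" "y2 \<in> A"
    and "x1 \<ominus> x2 \<in> I" "x2 \<ominus> x1 \<in> I" "y1 \<ominus> y2 \<in> I" "y2 \<ominus> y1 \<in> I"
    unfolding ideal_congruence_def by auto
  then show "(x1 \<ominus> y1, x2 \<ominus> y2) \<in> ideal_congruence I"
    unfolding ideal_congruence_def using ideal_sub_compat[OF assms] by simp
qed

lemma ideal_subset_zero_if_congruence_trivial: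
  assumes "ideal I" "ideal_congruence I = Id_on A"
  shows "I \<subseteq> {z}"
proof
  fix x
  assume "x \<in> I"
  moreover have "x \<in> A"
    using idealD(1)[OF assms(1)] \<open>x \<in> I\<close> by blast
  ultimately have "(x, z) \<in> ideal_congruence I"
    using idealD(2)[OF assms(1)] unfolding ideal_congruence_def by simp
  then show "x \<in> {z}"
    using assms(2) by auto
qed

lemma ideal_congruence_Int_subset_Id_on:
  assumes "I \<inter> J \<subseteq> {z}"
  shows "ideal_congruence I \<inter> ideal_congruence J \<subseteq> Id_on A"
proof
  fix p
  assume "p \<in> ideal_congruence I \<inter> ideal_congruence J"
  then obtain x y where "p = (x, y)" "x \<in> A" "y \<in> A" "x \<preceq> y" "y \<preceq> x"
    using assms unfolding ideal_congruence_def by blast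
  then show "p \<in> Id_on A"
    using below_antisym[of x y] by auto
qed

definition polar :: "'a set \<Rightarrow> 'a set" where
  "polar S = {x \<in> A. \<forall>s\<in>S. meet x s = z}"

lemma ideal_polar:
  assumes "S \<subseteq> A"
  shows "ideal (polar S)"
  unfolding ideal_def
proof (intro conjI ballI impI)
  show "polar S \<subseteq> A" "z \<in> polar S"
    using assms by (auto simp: polar_def meet_def)
next
  fix x y
  assume xy: "x \<in> A" "y \<in> A" and polar_xy: "x \<ominus> y \<in> polar S \<and> y \<in> polar S"
  show "x \<in> polar S"
    unfolding polar_def
  proof (intro CollectI conjI ballI xy)
    fix s
    assume "s \<in> S"
    then have sA: "s \<in> A" and xy_s: "meet (x \<ominus> y) s = z" and y_s: "meet y s = z"
      using assms polar_xy unfolding polar_def by auto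
    define t where "t = meet x s"
    have tA: "t \<in> A" and tx: "t \<preceq> x" and ts: "t \<preceq> s"
      using meet_below_left meet_below_right xy sA by (simp_all add: t_def)
    have "meet t y \<preceq> meet y s"
      using below_trans[OF _ tA sA meet_below_left ts] meet_below_right[of t y] tA xy sA
      by (intro meet_greatest) simp_all
    then have "t \<ominus> y = t"
      using sub_eq_self_if_meet_eq_zero[of t y] y_s tA xy by simp
    then have "t \<preceq> x \<ominus> y"
      using sub_mono[OF tA xy tx] by simp
    then have "t \<preceq> meet (x \<ominus> y) s"
      using meet_greatest[of "x \<ominus> y" s t] ts tA xy sA by simp
    then show "meet x s = z"
      using xy_s tA by (simp add: t_def)
  qed
qed

lemma polar_Int_self: "S \<inter> polar S \<subseteq> {z}"
  unfolding polar_def meet_def by auto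

lemma subset_polar_polar:
  assumes "S \<subseteq> A"
  shows "S \<subseteq> polar (polar S)"
proof
  fix x
  assume x: "x \<in> S"
  have "meet x s = z" if "s \<in> polar S" for s
    using that x assms meet_commute[of s x] unfolding polar_def by auto
  then show "x \<in> polar (polar S)"
    using x assms unfolding polar_def[of "polar S"] by auto
qed

definition down :: "'a \<Rightarrow> 'a set" where
  "down x = {y \<in> A. y \<preceq> x}"

lemma height_eq_card_down: "height A (\<ominus>) z x = card (down x) - 1"
proof -
  have "{y \<in> A. bck_le (\<ominus>) z z y \<and> bck_le (\<ominus>) z y x} = down x"
    using zero_sub unfolding down_def bck_le_def by blast
  then show ?thesis
    unfolding height_def by simp
qed

lemma bij_betw_sub_interval:
  assumes "x \<in> A" "s \<in> A" "s \<preceq> x"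
  shows "bij_betw (\<lambda>t. x \<ominus> t) {t \<in> down x. s \<preceq> t} (down (x \<ominus> s))"
proof (rule bij_betw_imageI)
  show "inj_on (\<lambda>t. x \<ominus> t) {t \<in> down x. s \<preceq> t}"
  proof (rule inj_onI)
    fix t1 t2
    assume "t1 \<in> {t \<in> down x. s \<preceq> t}" "t2 \<in> {t \<in> down x. s \<preceq> t}" "x \<ominus> t1 = x \<ominus> t2"
    then have "t1 \<in> A" "t2 \<in> A" "t1 \<preceq> x" "t2 \<preceq> x" "x \<ominus> t1 = x \<ominus> t2"
      unfolding down_def by auto
    then show "t1 = t2"
      using sub_sub_eq_if_below[OF assms(1)] by metis
  qed
  show "(\<lambda>t. x \<ominus> t) ` {t \<in> down x. s \<preceq> t} = down (x \<ominus> s)"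
  proof (intro equalityI subsetI)
    fix u
    assume "u \<in> (\<lambda>t. x \<ominus> t) ` {t \<in> down x. s \<preceq> t}"
    then show "u \<in> down (x \<ominus> s)"
      using sub_antimono[of x s] assms unfolding down_def by auto
  next
    fix u
    assume "u \<in> down (x \<ominus> s)"
    then have uA: "u \<in> A" and u: "u \<preceq> x \<ominus> s"
      unfolding down_def by auto
    have "u \<preceq> x"
      using below_trans[OF uA _ _ u sub_below] assms by simp
    then have u_eq: "u = x \<ominus> (x \<ominus> u)"
      using sub_sub_eq_if_below uA assms by simp
    have "s \<preceq> x \<ominus> u"
      using sub_antimono[OF assms(1) uA _ u] sub_sub_eq_if_below[OF assms] assms uA by simp
    then have "x \<ominus> u \<in> {t \<in> down x. s \<preceq> t}"
      using sub_below assms uA unfolding down_def by simp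
    from this u_eq show "u \<in> (\<lambda>t. x \<ominus> t) ` {t \<in> down x. s \<preceq> t}"
      by (rule rev_image_eqI)
  qed
qed

lemma subalgebra_generated:
  assumes "G \<subseteq> A"
  shows "subalgebra A (\<ominus>) z (generated A (\<ominus>) z G)"
proof -
  have "subalgebra A (\<ominus>) z A"
    unfolding subalgebra_def by simp
  with assms show ?thesis
    unfolding generated_def subalgebra_def by blast
qed

lemma subset_generated: "G \<subseteq> generated A (\<ominus>) z G"
  unfolding generated_def by blast

lemma generated_least: "subalgebra A (\<ominus>) z B \<Longrightarrow> G \<subseteq> B \<Longrightarrow> generated A (\<ominus>) z G \<subseteq> B"
  unfolding generated_def by blast

lemma maximal_elems_subset: "maximal_elems A (\<ominus>) z \<subseteq> A"
  unfolding maximal_elems_def by auto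

lemma maximal_elemD: "m \<in> maximal_elems A (\<ominus>) z \<Longrightarrow> y \<in> A \<Longrightarrow> m \<preceq> y \<Longrightarrow> y = m"
  unfolding maximal_elems_def bck_le_def by blast

lemma subalgebra_Diff_maximal_elem:
  assumes "m \<in> maximal_elems A (\<ominus>) z" "m \<noteq> z"
  shows "subalgebra A (\<ominus>) z (A - {m})"
  unfolding subalgebra_def
proof (intro conjI ballI)
  fix x y
  assume xy: "x \<in> A - {m}" "y \<in> A - {m}"
  then have "x \<ominus> y \<noteq> m"
    using maximal_elemD[OF assms(1), of x] sub_below[of x y] by auto
  with xy show "x \<ominus> y \<in> A - {m}"
    by simp
qed (use assms in auto)

end

section \<open>Subdirectly irreducible cBCK-algebras are trees\<close>

lemma subdirectly_irreducible_Int_congruences: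
  assumes "subdirectly_irreducible A f"
    and "congruence A f \<theta>1" "congruence A f \<theta>2" "\<theta>1 \<inter> \<theta>2 \<subseteq> Id_on A"
  shows "\<theta>1 = Id_on A \<or> \<theta>2 = Id_on A"
proof (rule ccontr)
  let ?F = "{\<theta>. congruence A f \<theta> \<and> \<theta> \<noteq> Id_on A}"
  assume "\<not> ?thesis"
  then have "\<Inter>?F \<subseteq> Id_on A"
    using assms(2-4) by blast
  moreover have "Id_on A \<subseteq> \<Inter>?F"
    unfolding congruence_def equiv_def refl_on_def by blast
  ultimately show False
    using assms(1) unfolding subdirectly_irreducible_def by blast
qed

locale si_cbck = cbck +
  assumes subdirectly_irreducible: "subdirectly_irreducible A f"
begin

lemma exists_nonzero: "\<exists>x\<in>A. x \<noteq> z"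
  using subdirectly_irreducible unfolding subdirectly_irreducible_def by metis

lemma meet_nonzero:
  assumes "a \<in> A" "b \<in> A" "a \<noteq> z" "b \<noteq> z"
  shows "meet a b \<noteq> z"
proof
  assume ab: "meet a b = z"
  define P where "P = polar {b}"
  have P_subset: "P \<subseteq> A"
    unfolding P_def polar_def by auto
  have "a \<in> P"
    using ab assms unfolding P_def polar_def by simp
  moreover have "b \<in> polar P"
    using subset_polar_polar[of "{b}"] assms unfolding P_def by simp
  moreover have "ideal_congruence P = Id_on A \<or> ideal_congruence (polar P) = Id_on A"
    using ideal_polar[of "{b}"] ideal_polar[OF P_subset] assms
    by (intro subdirectly_irreducible_Int_congruences[OF subdirectly_irreducible]
        congruence_ideal_congruence ideal_congruence_Int_subset_Id_on polar_Int_self)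
      (simp_all add: P_def)
  then have "P \<subseteq> {z} \<or> polar P \<subseteq> {z}"
    using ideal_subset_zero_if_congruence_trivial ideal_polar[of "{b}"] ideal_polar[OF P_subset]
      assms unfolding P_def by auto
  ultimately show False
    using assms by auto
qed

lemma below_common_bound_comparable:
  assumes "x \<in> A" "y1 \<in> A" "y2 \<in> A" "y1 \<preceq> x" "y2 \<preceq> x"
  shows "y1 \<preceq> y2 \<or> y2 \<preceq> y1"
proof (rule ccontr)
  assume "\<not> ?thesis"
  then have "meet (y1 \<ominus> y2) (y2 \<ominus> y1) \<noteq> z"
    using meet_nonzero assms by simp
  moreover have "meet (y1 \<ominus> y2) (y2 \<ominus> y1) = z"
    using prelinear_below_common_bound[OF assms(1-3) _ assms(4,5)]
      meet_below_left meet_below_right assms by simp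
  ultimately show False
    by contradiction
qed

lemma down_diff_above:
  assumes "x \<in> A" "s \<in> A" "s \<preceq> x"
  shows "{t \<in> down x. \<not> s \<preceq> t} = down s - {s}"
proof (intro equalityI subsetI)
  fix t
  assume "t \<in> {t \<in> down x. \<not> s \<preceq> t}"
  then have "t \<in> A" "t \<preceq> x" "\<not> s \<preceq> t"
    unfolding down_def by auto
  then show "t \<in> down s - {s}"
    using below_common_bound_comparable[of x t s] assms unfolding down_def by auto
next
  fix t
  assume "t \<in> down s - {s}"
  then have "t \<in> A" "t \<preceq> s" "t \<noteq> s"
    unfolding down_def by auto
  then show "t \<in> {t \<in> down x. \<not> s \<preceq> t}"
    using below_trans[of t s x] below_antisym[of t s] assms unfolding down_def by auto
qed

lemma maximal_elem_nonzero: "m \<in> maximal_elems A (\<ominus>) z \<Longrightarrow> m \<noteq> z"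
  using exists_nonzero maximal_elemD by fastforce

lemma maximal_elems_subset_if_generates:
  assumes "generates A (\<ominus>) z G"
  shows "maximal_elems A (\<ominus>) z \<subseteq> G"
proof
  fix m
  assume m: "m \<in> maximal_elems A (\<ominus>) z"
  show "m \<in> G"
  proof (rule ccontr)
    assume "m \<notin> G"
    then have "G \<subseteq> A - {m}"
      using assms unfolding generates_def by auto
    then have "generated A (\<ominus>) z G \<subseteq> A - {m}"
      using generated_least subalgebra_Diff_maximal_elem m maximal_elem_nonzero by blast
    then show False
      using assms m maximal_elems_subset unfolding generates_def by auto
  qed
qed

end

section \<open>Heights in finite subdirectly irreducible cBCK-algebras\<close>

locale finite_si_cbck = si_cbck +
  assumes finite_carrier: "finite A"
begin

abbreviation ht :: "'a \<Rightarrow> nat" where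
  "ht \<equiv> height A (\<ominus>) z"

lemma finite_down: "finite (down x)"
  using finite_carrier unfolding down_def by simp

lemma mem_down_self: "x \<in> A \<Longrightarrow> x \<in> down x"
  unfolding down_def by simp

lemma height_less:
  assumes "x \<in> A" "y \<in> A" "y \<preceq> x" "y \<noteq> x"
  shows "ht y < ht x"
proof -
  have "down y \<subseteq> down x"
    using below_trans[of _ y x] assms unfolding down_def by blast
  moreover have "x \<in> down x - down y"
    using below_antisym[of x y] sub_self[of x] assms unfolding down_def by blast
  ultimately have "down y \<subset> down x"
    by blast
  then have "card (down y) < card (down x)"
    using finite_down by (rule psubset_card_mono[rotated])
  moreover have "card (down y) > 0"
    using mem_down_self[OF assms(2)] finite_down card_gt_0_iff by blast
  ultimately show ?thesis
    unfolding height_eq_card_down by simp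
qed

lemma height_mono:
  assumes "x \<in> A" "y \<in> A" "y \<preceq> x"
  shows "ht y \<le> ht x"
  using height_less[OF assms] by (cases "y = x") simp_all

lemma height_eq_0_iff:
  assumes "x \<in> A"
  shows "ht x = 0 \<longleftrightarrow> x = z"
proof
  have "down z = {z}"
    unfolding down_def by auto
  then show "x = z \<Longrightarrow> ht x = 0"
    unfolding height_eq_card_down by simp
  show "ht x = 0 \<Longrightarrow> x = z"
    using height_less[OF assms zero_closed] assms by auto
qed

lemma height_sub:
  assumes "x \<in> A" "s \<in> A" "s \<preceq> x"
  shows "ht (x \<ominus> s) = ht x - ht s"
proof -
  let ?U = "{t \<in> down x. s \<preceq> t}" and ?V = "{t \<in> down x. \<not> s \<preceq> t}"
  have "card ?U + card ?V = card (?U \<union> ?V)"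
    using finite_down[of x] by (intro card_Un_disjoint[symmetric]) auto
  also have "?U \<union> ?V = down x"
    by blast
  finally have "card (down x) = card ?U + card ?V" ..
  moreover have "card ?U = card (down (x \<ominus> s))"
    using bij_betw_same_card[OF bij_betw_sub_interval[OF assms]] .
  moreover have "card ?V = card (down s) - 1"
    using down_diff_above[OF assms] finite_down mem_down_self[OF assms(2)] by simp
  moreover have "card (down s) > 0" "card (down (x \<ominus> s)) > 0"
    using mem_down_self[of s] mem_down_self[of "x \<ominus> s"] finite_down assms
    by (auto simp: card_gt_0_iff)
  ultimately show ?thesis
    unfolding height_eq_card_down by linarith
qed

lemma height_le_alg_height: "x \<in> A \<Longrightarrow> ht x \<le> alg_height A (\<ominus>) z"
  unfolding alg_height_def using finite_carrier by simp

lemma exists_maximal_above: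
  assumes "x \<in> A"
  shows "\<exists>m\<in>maximal_elems A (\<ominus>) z. x \<preceq> m"
proof -
  have "\<exists>m. (m \<in> A \<and> x \<preceq> m) \<and> (\<forall>y. y \<in> A \<and> x \<preceq> y \<longrightarrow> ht y \<le> ht m)"
    using assms height_le_alg_height
    by (intro ex_has_greatest_nat[where b = "Suc (alg_height A (\<ominus>) z)"]) (auto simp: less_Suc_eq_le)
  then obtain m where m: "m \<in> A" "x \<preceq> m"
    and highest: "\<And>y. y \<in> A \<Longrightarrow> x \<preceq> y \<Longrightarrow> ht y \<le> ht m"
    by blast
  have "m \<in> maximal_elems A (\<ominus>) z"
    unfolding maximal_elems_def bck_le_def
  proof (intro CollectI conjI ballI impI m(1))
    fix y
    assume y: "y \<in> A" "m \<preceq> y"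
    show "y = m"
    proof (rule ccontr)
      assume "y \<noteq> m"
      then have "ht m < ht y"
        using height_less[OF y(1) m(1) y(2)] by simp
      moreover have "ht y \<le> ht m"
        using highest[OF y(1) below_trans[OF assms m(1) y(1) m(2) y(2)]] .
      ultimately show False
        by simp
    qed
  qed
  then show ?thesis
    using m by blast
qed

lemma exists_maximal_of_alg_height: "\<exists>m\<in>maximal_elems A (\<ominus>) z. ht m = alg_height A (\<ominus>) z"
proof -
  have "alg_height A (\<ominus>) z \<in> ht ` A"
    unfolding alg_height_def using finite_carrier zero_closed by (intro Max_in) blast+
  then obtain x where x: "x \<in> A" "ht x = alg_height A (\<ominus>) z"
    by auto
  then obtain m where m: "m \<in> maximal_elems A (\<ominus>) z" "x \<preceq> m"
    using exists_maximal_above by blast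
  then have "m \<in> A"
    using maximal_elems_subset by blast
  then have "ht m = alg_height A (\<ominus>) z"
    using height_mono[OF _ x(1) m(2)] height_le_alg_height x(2) by (simp add: le_antisym)
  then show ?thesis
    using m by blast
qed

lemma exists_atom_below:
  assumes "x \<in> A" "x \<noteq> z"
  shows "\<exists>a\<in>A. a \<preceq> x \<and> ht a = 1"
proof -
  have "\<exists>a. (a \<in> A \<and> a \<noteq> z \<and> a \<preceq> x) \<and> (\<forall>y. y \<in> A \<and> y \<noteq> z \<and> y \<preceq> x \<longrightarrow> ht a \<le> ht y)"
    using assms by (intro ex_has_least_nat[where k = x]) simp
  then obtain a where a: "a \<in> A" "a \<noteq> z" "a \<preceq> x"
    and lowest: "\<And>y. y \<in> A \<Longrightarrow> y \<noteq> z \<Longrightarrow> y \<preceq> x \<Longrightarrow> ht a \<le> ht y"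
    by blast
  have "down a = {z, a}"
  proof (intro equalityI subsetI)
    fix t
    assume "t \<in> down a"
    then have t: "t \<in> A" "t \<preceq> a"
      unfolding down_def by auto
    show "t \<in> {z, a}"
    proof (rule ccontr)
      assume "t \<notin> {z, a}"
      then have "ht t < ht a"
        using height_less[OF a(1) t] by simp
      moreover have "ht a \<le> ht t"
        using lowest[OF t(1) _ below_trans[OF t(1) a(1) assms(1) t(2) a(3)]] \<open>t \<notin> {z, a}\<close> by simp
      ultimately show False
        by simp
    qed
  qed (use a(1) in \<open>auto simp: down_def\<close>)
  then show ?thesis
    using a unfolding height_eq_card_down by auto
qed

section \<open>Subalgebras containing the maximal elements\<close>

context
  fixes S :: "'a set" and s :: 'a
  assumes subalgebra_S: "subalgebra A (\<ominus>) z S"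
    and s_mem: "s \<in> S" and s_nonzero: "s \<noteq> z"
    and s_least: "\<And>x. x \<in> S \<Longrightarrow> x \<noteq> z \<Longrightarrow> ht s \<le> ht x"
begin

private lemma S_subset: "S \<subseteq> A"
  using subalgebra_S unfolding subalgebra_def by blast

private lemma S_sub_closed: "x \<in> S \<Longrightarrow> y \<in> S \<Longrightarrow> x \<ominus> y \<in> S"
  using subalgebra_S unfolding subalgebra_def by blast

private lemma s_carrier: "s \<in> A" and s_height_pos: "0 < ht s"
  using s_mem s_nonzero S_subset height_eq_0_iff by auto

lemma least_nonzero_below:
  assumes "x \<in> S" "x \<noteq> z"
  shows "s \<preceq> x"
proof -
  have xA: "x \<in> A"
    using assms S_subset by blast
  have "meet x s \<in> S"
    unfolding meet_def using S_sub_closed assms s_mem by blast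
  moreover have "meet x s \<noteq> z"
    using meet_nonzero xA s_carrier assms s_nonzero by simp
  ultimately have "ht s \<le> ht (meet x s)"
    by (rule s_least)
  then have "meet x s = s"
    using height_less[OF s_carrier meet_closed[OF xA s_carrier] meet_below_right[OF xA s_carrier]]
    by (metis not_le)
  then show ?thesis
    using meet_below_left[OF xA s_carrier] by simp
qed

lemma height_sub_least:
  assumes "x \<in> S" "x \<noteq> z"
  shows "ht (x \<ominus> s) + ht s = ht x"
  using height_sub[OF _ s_carrier least_nonzero_below[OF assms]] s_least[OF assms] assms S_subset
  by auto

lemma least_height_dvd_height:
  assumes "x \<in> S"
  shows "ht s dvd ht x"
  using assms
proof (induction "ht x" arbitrary: x rule: less_induct)
  case less
  show ?case
  proof (cases "x = z")
    case True
    then show ?thesis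
      using height_eq_0_iff[OF zero_closed] by simp
  next
    case False
    have "x \<ominus> s \<in> S"
      using S_sub_closed less.prems s_mem by blast
    moreover have sum: "ht (x \<ominus> s) + ht s = ht x"
      using height_sub_least[OF less.prems False] .
    ultimately have "ht s dvd ht (x \<ominus> s)"
      using less.hyps[of "x \<ominus> s"] s_height_pos by simp
    then show ?thesis
      unfolding sum[symmetric] by simp
  qed
qed

lemma eq_sub_least_if_between:
  assumes "w \<in> S" "w \<noteq> z" "y \<in> A" "w \<ominus> s \<preceq> y" "y \<preceq> w" "y \<noteq> w" "ht s dvd ht y"
  shows "y = w \<ominus> s"
proof (rule ccontr)
  assume y_ne: "y \<noteq> w \<ominus> s"
  have wA: "w \<in> A" and w'S: "w \<ominus> s \<in> S"
    using assms(1) S_subset S_sub_closed s_mem by auto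
  then have "ht (w \<ominus> s) < ht y"
    using height_less[OF assms(3) _ assms(4)] y_ne s_carrier by simp
  moreover have "ht y < ht w"
    using height_less[OF wA assms(3,5,6)] .
  moreover have "ht s dvd ht y - ht (w \<ominus> s)"
    using dvd_diff_nat[OF assms(7) least_height_dvd_height[OF w'S]] .
  ultimately show False
    using dvd_imp_le[of "ht s" "ht y - ht (w \<ominus> s)"] height_sub_least[OF assms(1,2)] by simp
qed

lemma mem_if_least_height_dvd:
  assumes "w \<in> S" "y \<in> A" "y \<preceq> w" "ht s dvd ht y"
  shows "y \<in> S"
  using assms
proof (induction "ht w" arbitrary: w rule: less_induct)
  case less
  show ?case
  proof (cases "y = w")
    case True
    then show ?thesis
      using less.prems by simp
  next
    case y_ne_w: False
    have wA: "w \<in> A" and w'S: "w \<ominus> s \<in> S"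
      using less.prems S_subset S_sub_closed s_mem by auto
    have "w \<noteq> z"
    proof
      assume "w = z"
      then have "y = z"
        using less.prems(2,3) by simp
      then show False
        using y_ne_w \<open>w = z\<close> by simp
    qed
    have "y \<preceq> w \<ominus> s \<or> w \<ominus> s \<preceq> y"
      using below_common_bound_comparable[OF wA less.prems(2) _ less.prems(3) sub_below[OF wA s_carrier]]
        wA s_carrier by simp
    then show ?thesis
    proof
      assume "y \<preceq> w \<ominus> s"
      moreover have "ht (w \<ominus> s) < ht w"
        using height_sub_least[OF less.prems(1) \<open>w \<noteq> z\<close>] s_height_pos by simp
      ultimately show ?thesis
        using less.hyps[OF _ w'S less.prems(2) _ less.prems(4)] by blast
    next
      assume "w \<ominus> s \<preceq> y"
      then show ?thesis
        using eq_sub_least_if_between[OF less.prems(1) \<open>w \<noteq> z\<close> less.prems(2) _ less.prems(3) y_ne_w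
          less.prems(4)] w'S by simp
    qed
  qed
qed

end

lemma subalgebra_containing_maximals_eq_level_set:
  assumes "subalgebra A (\<ominus>) z S" "maximal_elems A (\<ominus>) z \<subseteq> S"
  obtains g where "S = level_set A (\<ominus>) z g" "\<And>x. x \<in> S \<Longrightarrow> x \<noteq> z \<Longrightarrow> g \<le> ht x"
proof -
  have S_subset: "S \<subseteq> A"
    using assms(1) unfolding subalgebra_def by blast
  obtain m where "m \<in> maximal_elems A (\<ominus>) z"
    using exists_maximal_above[OF zero_closed] by blast
  then have "m \<in> S \<and> m \<noteq> z"
    using assms(2) maximal_elem_nonzero by auto
  then have "\<exists>s. (s \<in> S \<and> s \<noteq> z) \<and> (\<forall>x. x \<in> S \<and> x \<noteq> z \<longrightarrow> ht s \<le> ht x)"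
    by (rule ex_has_least_nat)
  then obtain s where s: "s \<in> S" "s \<noteq> z" and least: "\<And>x. x \<in> S \<Longrightarrow> x \<noteq> z \<Longrightarrow> ht s \<le> ht x"
    by blast
  have "S = level_set A (\<ominus>) z (ht s)"
  proof (intro equalityI subsetI)
    fix x
    assume "x \<in> S"
    then show "x \<in> level_set A (\<ominus>) z (ht s)"
      using least_height_dvd_height[OF assms(1) s least] S_subset unfolding level_set_def by blast
  next
    fix y
    assume "y \<in> level_set A (\<ominus>) z (ht s)"
    then have y: "y \<in> A" "ht s dvd ht y"
      unfolding level_set_def by auto
    then obtain m' where "m' \<in> maximal_elems A (\<ominus>) z" "y \<preceq> m'"
      using exists_maximal_above by blast
    then show "y \<in> S"
      using mem_if_least_height_dvd[OF assms(1) s least] assms(2) y by blast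
  qed
  then show ?thesis
    using that least by blast
qed

lemma exists_nonzero_meet_of_maximals_below_alg_height:
  assumes "\<not> is_chain_alg A (\<ominus>) z"
  obtains m1 m2 where "m1 \<in> maximal_elems A (\<ominus>) z" "m2 \<in> maximal_elems A (\<ominus>) z"
    "meet m1 m2 \<noteq> z" "ht (meet m1 m2) < alg_height A (\<ominus>) z"
proof -
  obtain u v where uv: "u \<in> A" "v \<in> A" "\<not> u \<preceq> v" "\<not> v \<preceq> u"
    using assms unfolding is_chain_alg_def bck_le_def by blast
  obtain m1 m2 where m1: "m1 \<in> maximal_elems A (\<ominus>) z" "u \<preceq> m1"
    and m2: "m2 \<in> maximal_elems A (\<ominus>) z" "v \<preceq> m2"
    using exists_maximal_above uv by meson
  have m1A: "m1 \<in> A" and m2A: "m2 \<in> A"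
    using m1 m2 maximal_elems_subset by auto
  have "m1 \<noteq> m2"
    using below_common_bound_comparable[OF m1A uv(1,2) m1(2)] m2(2) uv(3,4) by auto
  then have "meet m1 m2 \<noteq> m1"
    using maximal_elemD[OF m1(1) m2A] meet_below_right[OF m1A m2A] by auto
  then have "ht (meet m1 m2) < ht m1"
    using height_less[OF m1A meet_closed[OF m1A m2A] meet_below_left[OF m1A m2A]] by simp
  moreover have "meet m1 m2 \<noteq> z"
    using meet_nonzero[OF m1A m2A] maximal_elem_nonzero m1(1) m2(1) by blast
  ultimately show ?thesis
    using that m1(1) m2(1) height_le_alg_height[OF m1A] by simp
qed

lemma maximal_elems_generate_if_S_delta_empty:
  assumes "S_delta A (\<ominus>) z = {}" "\<not> is_chain_alg A (\<ominus>) z"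
  shows "generated A (\<ominus>) z (maximal_elems A (\<ominus>) z) = A"
proof (rule ccontr)
  let ?M = "maximal_elems A (\<ominus>) z" and ?n = "alg_height A (\<ominus>) z"
  let ?S = "generated A (\<ominus>) z ?M"
  assume proper: "?S \<noteq> A"
  have sub: "subalgebra A (\<ominus>) z ?S" and M_S: "?M \<subseteq> ?S"
    using subalgebra_generated[OF maximal_elems_subset] subset_generated by auto
  obtain g where g: "?S = level_set A (\<ominus>) z g"
    and g_least: "\<And>x. x \<in> ?S \<Longrightarrow> x \<noteq> z \<Longrightarrow> g \<le> ht x"
    using subalgebra_containing_maximals_eq_level_set[OF sub M_S] by blast
  have "g \<noteq> 1"
    using proper g unfolding level_set_def by auto
  moreover have "g dvd ?n"
    using exists_maximal_of_alg_height M_S g unfolding level_set_def by auto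
  moreover have "g \<noteq> ?n"
  proof -
    obtain m1 m2 where m: "m1 \<in> ?M" "m2 \<in> ?M" "meet m1 m2 \<noteq> z" "ht (meet m1 m2) < ?n"
      using exists_nonzero_meet_of_maximals_below_alg_height[OF assms(2)] by blast
    have "meet m1 m2 \<in> ?S"
      using sub M_S m(1,2) unfolding subalgebra_def meet_def by blast
    then show ?thesis
      using g_least m(3,4) by fastforce
  qed
  moreover have "?S = level_set A (\<ominus>) z g \<union> ?M"
    using g M_S by auto
  ultimately have "?S \<in> S_delta A (\<ominus>) z"
    using sub unfolding S_delta_def by blast
  then show False
    using assms(1) by simp
qed

lemma S_delta_empty_if_maximal_elems_generate:
  assumes "generated A (\<ominus>) z (maximal_elems A (\<ominus>) z) = A"
  shows "S_delta A (\<ominus>) z = {}"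
proof (rule ccontr)
  let ?M = "maximal_elems A (\<ominus>) z" and ?n = "alg_height A (\<ominus>) z"
  assume "S_delta A (\<ominus>) z \<noteq> {}"
  then obtain k where k: "k dvd ?n" "k \<noteq> 1" "k \<noteq> ?n"
    and sub: "subalgebra A (\<ominus>) z (level_set A (\<ominus>) z k \<union> ?M)"
    unfolding S_delta_def by blast
  have A_subset: "A \<subseteq> level_set A (\<ominus>) z k \<union> ?M"
    using generated_least[OF sub] assms by blast
  obtain m0 where m0: "m0 \<in> ?M" "ht m0 = ?n"
    using exists_maximal_of_alg_height by blast
  have m0A: "m0 \<in> A"
    using m0(1) maximal_elems_subset by blast
  then obtain a where a: "a \<in> A" "a \<preceq> m0" "ht a = 1"
    using exists_atom_below maximal_elem_nonzero[OF m0(1)] by blast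
  have "a \<notin> level_set A (\<ominus>) z k"
    using a(3) k(2) unfolding level_set_def by simp
  moreover have "a \<notin> ?M"
  proof
    assume "a \<in> ?M"
    then have "m0 = a"
      using maximal_elemD[OF _ m0A a(2)] by blast
    then have "?n = 1"
      using m0(2) a(3) by simp
    then show False
      using k(1,2) by simp
  qed
  ultimately show False
    using A_subset a(1) by blast
qed

end

theorem mainTheorem5:
  fixes A :: "'a set" and f :: "'a \<Rightarrow> 'a \<Rightarrow> 'a" and z :: 'a
  assumes "finite A"
    and "cbck_algebra A f z"
    and "subdirectly_irreducible A f"
    and "\<not> is_chain_alg A f z"
  shows "(generates A f z (maximal_elems A f z) \<and>
          (\<forall>G. generates A f z G \<longrightarrow> maximal_elems A f z \<subseteq> G))
         \<longleftrightarrow> S_delta A f z = {}"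
proof -
  interpret finite_si_cbck A f z
    by unfold_locales (fact assms)+
  show ?thesis
    using S_delta_empty_if_maximal_elems_generate maximal_elems_generate_if_S_delta_empty[OF _ assms(4)]
      maximal_elems_subset_if_generates maximal_elems_subset
    unfolding generates_def by blast
qed

end
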